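(* $\mathcal{P}_2\subset\mathcal{L}$: if $r$ is a Hermitian symmetric polynomial on $\mathbb{C}^n$ such that for all $z,w\in\mathbb{C}^n$ the matrix $\begin{pmatrix} r(z,\overline z) & r(z,\overline w)\\ r(w,\overline z) & r(w,\overline w)\end{pmatrix}$ is non-negative definite, then $r\ge0$ and $\log r(z,\overline z)$ is plurisubharmonic.
   Context: A Hermitian symmetric polynomial is $r(z,\overline w)=\sum c_{\alpha\beta}z^\alpha\overline w^\beta$ with $c_{\alpha\beta}=\overline{c_{\beta\alpha}}$. $\mathcal{L}$ denotes the set of such $r$ with $r\ge0$ and $\log(r)$ plurisubharmonic. *)

theory Defs
  imports "HOL-Analysis.Analysis"
begin

definition monom_pow :: "complex ^ 'n \<Rightarrow> ('n::finite \<Rightarrow> nat) \<Rightarrow> complex" where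
  "monom_pow z \<alpha> = (\<Prod>i\<in>UNIV. (z $ i) ^ (\<alpha> i))"

text \<open>A Hermitian symmetric polynomial is given by its coefficient function c,
  which must have finite support and satisfy c(alpha,beta) = conj c(beta,alpha).\<close>
definition herm_sym_coeffs :: "(('n::finite \<Rightarrow> nat) \<Rightarrow> ('n \<Rightarrow> nat) \<Rightarrow> complex) \<Rightarrow> bool" where
  "herm_sym_coeffs c \<longleftrightarrow> finite {(\<alpha>, \<beta>). c \<alpha> \<beta> \<noteq> 0} \<and> (\<forall>\<alpha> \<beta>. c \<alpha> \<beta> = cnj (c \<beta> \<alpha>))"

text \<open>hpoly c z w is the value r(z, conj w) = sum c(alpha,beta) z^alpha (conj w)^beta.\<close>
definition hpoly :: "(('n::finite \<Rightarrow> nat) \<Rightarrow> ('n \<Rightarrow> nat) \<Rightarrow> complex) \<Rightarrow> complex ^ 'n \<Rightarrow> complex ^ 'n \<Rightarrow> complex" where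
  "hpoly c z w = (\<Sum>(\<alpha>, \<beta>)\<in>{(\<alpha>, \<beta>). c \<alpha> \<beta> \<noteq> 0}.
       c \<alpha> \<beta> * monom_pow z \<alpha> * monom_pow (\<chi> i. cnj (w $ i)) \<beta>)"

definition nonneg_def_2x2 :: "complex \<Rightarrow> complex \<Rightarrow> complex \<Rightarrow> complex \<Rightarrow> bool" where
  "nonneg_def_2x2 m11 m12 m21 m22 \<longleftrightarrow>
     (\<forall>a b :: complex.
        let q = cnj a * m11 * a + cnj a * m12 * b + cnj b * m21 * a + cnj b * m22 * b
        in Im q = 0 \<and> Re q \<ge> 0)"

definition usc :: "('a::topological_space \<Rightarrow> ereal) \<Rightarrow> bool" where
  "usc u \<longleftrightarrow> (\<forall>c. open {x. u x < c})"

definition circle_mean :: "(complex \<Rightarrow> ereal) \<Rightarrow> complex \<Rightarrow> real \<Rightarrow> ereal" where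
  "circle_mean v a \<rho> =
     (enn2ereal (\<integral>\<^sup>+ \<theta>. e2ennreal (v (a + of_real \<rho> * cis \<theta>)) * indicator {0..2*pi} \<theta> \<partial>lborel)
      - enn2ereal (\<integral>\<^sup>+ \<theta>. e2ennreal (- v (a + of_real \<rho> * cis \<theta>)) * indicator {0..2*pi} \<theta> \<partial>lborel))
     / ereal (2 * pi)"

text \<open>Subharmonic functions on the whole complex plane (values in [-inf, inf), the
  constant -inf allowed): upper semicontinuous with the sub-mean value property.\<close>
definition subharmonic_C :: "(complex \<Rightarrow> ereal) \<Rightarrow> bool" where
  "subharmonic_C v \<longleftrightarrow> usc v \<and> (\<forall>x. v x \<noteq> \<infinity>) \<and>
     (\<forall>a \<rho>. \<rho> > 0 \<longrightarrow> v a \<le> circle_mean v a \<rho>)"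

definition psh :: "(complex ^ 'n::finite \<Rightarrow> ereal) \<Rightarrow> bool" where
  "psh u \<longleftrightarrow> usc u \<and> (\<forall>a b. subharmonic_C (\<lambda>l. u (a + l *s b)))"

definition elog :: "real \<Rightarrow> ereal" where
  "elog x = (if x \<le> 0 then -\<infinity> else ereal (ln x))"

end

theory Submission
  imports Defs "HOL-Complex_Analysis.Complex_Analysis" "HOL-Computational_Algebra.Fundamental_Theorem_Algebra"
begin

text \<open>Restrict \<open>r\<close> to a complex line, \<open>R(l) = r(A + l B, conj (A + l B))\<close>. For fixed \<open>a\<close> with
  \<open>R(a) > 0\<close>, the function \<open>h(l) = r(A + l B, conj (A + a B))\<close> is a polynomial in \<open>l\<close> with
  \<open>h(a) = R(a)\<close>, and non-negativity of the \<open>2 \<times> 2\<close> matrices is the Cauchy-Schwarz inequality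
  \<open>|h(l)|\<^sup>2 \<le> R(l) R(a)\<close>. Hence \<open>ln R \<ge> 2 ln |h| - ln R(a)\<close>, and by Jensen's formula the circle
  means of \<open>ln |h|\<close> about \<open>a\<close> are at least \<open>ln |h(a)|\<close>; so those of \<open>ln R\<close> are at least \<open>ln R(a)\<close>.\<close>

section \<open>Circle means of \<open>ln |p|\<close> for polynomials \<open>p\<close>\<close>

lemma holomorphic_unit_circle_mean:
  fixes f :: "complex \<Rightarrow> complex"
  assumes "continuous_on (cball 0 1) f" "f holomorphic_on ball 0 1"
  shows "((\<lambda>\<theta>. f (cis \<theta>)) has_integral (of_real (2*pi) * f 0)) {0..2*pi}"
proof -
  have "((\<lambda>u. f u / (u - 0)) has_contour_integral (2 * of_real pi * \<i> * f 0)) (circlepath 0 1)"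
    by (rule Cauchy_integral_circlepath) (use assms in auto)
  then have "((\<lambda>t. f (cis t) / cis t * \<i> * cis t) has_integral (2 * of_real pi * \<i> * f 0)) {0..2*pi}"
    using has_contour_integral_part_circlepath_iff[of 0 "2*pi" "\<lambda>u. f u / (u - 0)" _ 0 1]
    by (simp add: circlepath_def)
  then have "((\<lambda>t. \<i> * f (cis t)) has_integral (2 * of_real pi * \<i> * f 0)) {0..2*pi}"
    by (rule has_integral_eq[rotated]) (simp add: field_simps)
  from has_integral_mult_right[OF this, of "- \<i>"] show ?thesis
    by (simp add: algebra_simps)
qed

lemma one_minus_mult_cis_nonzero:
  assumes "cmod q < 1"
  shows "1 - q * cis \<theta> \<noteq> 0"
proof
  assume "1 - q * cis \<theta> = 0"
  then have "cmod (q * cis \<theta>) = 1" by (metis eq_iff_diff_eq_0 norm_one)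
  then show False using assms by (simp add: norm_mult)
qed

text \<open>\<open>ln |1 - q u|\<close> is the real part of \<open>Ln (1 - q u)\<close>, holomorphic near the closed unit disc.\<close>
lemma has_integral_ln_norm_one_minus_cis:
  assumes q: "cmod q < 1"
  shows "((\<lambda>\<theta>. ln (cmod (1 - q * cis \<theta>))) has_integral 0) {0..2*pi}"
proof -
  let ?S = "{u. 0 < Re (1 - q * u)}"
  have "cball 0 1 \<subseteq> ?S"
  proof
    fix u :: complex assume "u \<in> cball 0 1"
    then have "Re (q * u) \<le> cmod q"
      using complex_Re_le_cmod[of "q * u"] mult_left_le[of "cmod u" "cmod q"] by (simp add: norm_mult)
    then show "u \<in> ?S" using q by simp
  qed
  moreover have "(\<lambda>u. Ln (1 - q * u)) holomorphic_on ?S"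
    by (rule holomorphic_on_Ln') (auto intro!: holomorphic_intros simp: complex_nonpos_Reals_iff)
  ultimately have hol: "(\<lambda>u. Ln (1 - q * u)) holomorphic_on cball 0 1"
    by (rule holomorphic_on_subset[rotated])
  have "((\<lambda>\<theta>. Ln (1 - q * cis \<theta>)) has_integral (of_real (2*pi) * Ln (1 - q * 0))) {0..2*pi}"
    using holomorphic_on_subset[OF hol ball_subset_cball]
    by (intro holomorphic_unit_circle_mean holomorphic_on_imp_continuous_on hol)
  from has_integral_linear[OF this bounded_linear_Re] show ?thesis
    using one_minus_mult_cis_nonzero[OF q] by (simp add: o_def)
qed

abbreviation lborel_circle :: "real measure"
  where "lborel_circle \<equiv> restrict_space lborel {0..2*pi}"

lemma lborel_circle_continuous:
  fixes g :: "real \<Rightarrow> real"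
  assumes "continuous_on {0..2*pi} g"
  shows "integrable lborel_circle g" "integral\<^sup>L lborel_circle g = integral {0..2*pi} g"
proof -
  have int: "set_integrable lborel {0..2*pi} g"
    by (rule borel_integrable_atLeastAtMost'[OF assms])
  then show "integrable lborel_circle g"
    by (subst integrable_restrict_space) (auto simp: set_integrable_def)
  show "integral\<^sup>L lborel_circle g = integral {0..2*pi} g"
    using set_borel_integral_eq_integral(2)[OF int]
    by (subst integral_restrict_space) (auto simp: set_lebesgue_integral_def)
qed

lemma lborel_circle_has_integral:
  fixes g :: "real \<Rightarrow> real"
  assumes "continuous_on {0..2*pi} g" "(g has_integral I) {0..2*pi}"
  shows "integrable lborel_circle g" "integral\<^sup>L lborel_circle g = I"
  using lborel_circle_continuous[OF assms(1)] assms(2) by (auto simp: integral_unique)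

lemma lborel_circle_const:
  "integrable lborel_circle (\<lambda>_. c)" "integral\<^sup>L lborel_circle (\<lambda>_. c) = 2*pi*c"
  using lborel_circle_has_integral[of "\<lambda>_. c" "2*pi*c"] has_integral_const_real[of c 0 "2*pi"]
  by auto

lemma countable_cis_eq: "countable {\<theta>. cis \<theta> = u}"
proof (cases "\<exists>\<theta>\<^sub>0. cis \<theta>\<^sub>0 = u")
  case True
  then obtain \<theta>\<^sub>0 where \<theta>\<^sub>0: "cis \<theta>\<^sub>0 = u" by blast
  have "{\<theta>. cis \<theta> = u} \<subseteq> range (\<lambda>n::int. \<theta>\<^sub>0 + 2*pi * of_int n)"
  proof
    fix \<theta> assume "\<theta> \<in> {\<theta>. cis \<theta> = u}"
    then have "exp (\<i> * of_real \<theta>) = exp (\<i> * of_real \<theta>\<^sub>0)" using \<theta>\<^sub>0 by (simp add: cis_conv_exp)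
    then obtain n :: int where "\<i> * of_real \<theta> = \<i> * of_real \<theta>\<^sub>0 + of_real (of_int (2*n) * pi) * \<i>"
      unfolding exp_eq by blast
    then have "Im (\<i> * of_real \<theta>) = Im (\<i> * of_real \<theta>\<^sub>0 + of_real (of_int (2*n) * pi) * \<i>)"
      by simp
    then have "\<theta> = \<theta>\<^sub>0 + 2*pi * of_int n" by simp
    then show "\<theta> \<in> range (\<lambda>n::int. \<theta>\<^sub>0 + 2*pi * of_int n)" by auto
  qed
  then show ?thesis by (rule countable_subset) simp
qed simp

lemma AE_lborel_circle_avoids:
  assumes "\<rho> \<noteq> 0"
  shows "AE \<theta> in lborel_circle. a + of_real \<rho> * cis \<theta> \<noteq> b"
proof -
  have "{\<theta>. a + of_real \<rho> * cis \<theta> = b} = {\<theta>. cis \<theta> = (b - a) / of_real \<rho>}"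
    using assms by (auto simp: field_simps)
  then have "AE \<theta> in lborel. \<theta> \<notin> {\<theta>. a + of_real \<rho> * cis \<theta> = b}"
    using countable_cis_eq by (intro AE_not_in countable_imp_null_set_lborel) simp
  then show ?thesis
    by (subst AE_restrict_space_iff) auto
qed

lemma AE_lborel_circle_avoids_finite:
  assumes "\<rho> \<noteq> 0" "finite Z"
  shows "AE \<theta> in lborel_circle. a + of_real \<rho> * cis \<theta> \<notin> Z"
proof -
  have "AE \<theta> in lborel_circle. \<forall>b\<in>Z. a + of_real \<rho> * cis \<theta> \<noteq> b"
    using assms by (subst AE_finite_all) (auto intro!: AE_lborel_circle_avoids)
  then show ?thesis by eventually_elim blast
qed

lemma borel_measurable_ln_continuous:
  fixes g :: "real \<Rightarrow> real"
  assumes "continuous_on UNIV g"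
  shows "(\<lambda>\<theta>. ln (g \<theta>)) \<in> borel_measurable lborel_circle"
  using borel_measurable_continuous_onI[OF assms]
  by (intro borel_measurable_ln measurable_restrict_space1) (simp add: measurable_cong_sets[OF sets_lborel refl])

lemma lborel_circle_ln_norm_factor:
  fixes w q :: complex
  assumes q: "cmod q < 1" and "m > 0"
    and factor: "\<And>\<theta>. cmod (of_real \<rho> * cis \<theta> - w) = m * cmod (1 - q * cis \<theta>)"
  shows "integrable lborel_circle (\<lambda>\<theta>. ln (cmod (of_real \<rho> * cis \<theta> - w)))"
        "integral\<^sup>L lborel_circle (\<lambda>\<theta>. ln (cmod (of_real \<rho> * cis \<theta> - w))) = 2*pi*ln m"
proof -
  have eq: "(\<lambda>\<theta>. ln (cmod (of_real \<rho> * cis \<theta> - w))) = (\<lambda>\<theta>. ln m + ln (cmod (1 - q * cis \<theta>)))"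
    using one_minus_mult_cis_nonzero[OF q] \<open>m > 0\<close> by (simp add: factor ln_mult)
  have "continuous_on {0..2*pi} (\<lambda>\<theta>. ln m + ln (cmod (1 - q * cis \<theta>)))"
    using one_minus_mult_cis_nonzero[OF q] by (intro continuous_intros) auto
  moreover have "((\<lambda>\<theta>. ln m + ln (cmod (1 - q * cis \<theta>))) has_integral (2*pi*ln m + 0)) {0..2*pi}"
    using has_integral_const_real[of "ln m" 0 "2*pi"]
    by (intro has_integral_add has_integral_ln_norm_one_minus_cis q) simp
  ultimately show "integrable lborel_circle (\<lambda>\<theta>. ln (cmod (of_real \<rho> * cis \<theta> - w)))"
        "integral\<^sup>L lborel_circle (\<lambda>\<theta>. ln (cmod (of_real \<rho> * cis \<theta> - w))) = 2*pi*ln m"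
    unfolding eq using lborel_circle_has_integral by auto
qed

lemma lborel_circle_ln_norm_inside:
  fixes w :: complex
  assumes "cmod w < \<rho>"
  shows "integrable lborel_circle (\<lambda>\<theta>. ln (cmod (of_real \<rho> * cis \<theta> - w)))"
        "integral\<^sup>L lborel_circle (\<lambda>\<theta>. ln (cmod (of_real \<rho> * cis \<theta> - w))) = 2*pi*ln \<rho>"
proof -
  have \<rho>: "\<rho> > 0" using assms norm_ge_zero[of w] by linarith
  have q: "cmod (cnj w / of_real \<rho>) < 1" using assms \<rho> by (simp add: norm_divide)
  have factor: "cmod (of_real \<rho> * cis \<theta> - w) = \<rho> * cmod (1 - cnj w / of_real \<rho> * cis \<theta>)" for \<theta>
  proof -
    have "of_real \<rho> * cis \<theta> - w = of_real \<rho> * cis \<theta> * cnj (1 - cnj w / of_real \<rho> * cis \<theta>)"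
      using \<rho> cis_mult[of \<theta> "- \<theta>"] by (simp add: cis_cnj field_simps)
    then show ?thesis
      using \<rho> by (simp only: norm_mult complex_mod_cnj norm_of_real norm_cis)
  qed
  then show "integrable lborel_circle (\<lambda>\<theta>. ln (cmod (of_real \<rho> * cis \<theta> - w)))"
        "integral\<^sup>L lborel_circle (\<lambda>\<theta>. ln (cmod (of_real \<rho> * cis \<theta> - w))) = 2*pi*ln \<rho>"
    using lborel_circle_ln_norm_factor[OF q \<rho> factor] by auto
qed

lemma lborel_circle_ln_norm_outside:
  fixes w :: complex
  assumes "\<bar>\<rho>\<bar> < cmod w"
  shows "integrable lborel_circle (\<lambda>\<theta>. ln (cmod (of_real \<rho> * cis \<theta> - w)))"
        "integral\<^sup>L lborel_circle (\<lambda>\<theta>. ln (cmod (of_real \<rho> * cis \<theta> - w))) = 2*pi*ln (cmod w)"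
proof -
  have "w \<noteq> 0" using assms by auto
  then have q: "cmod (of_real \<rho> / w) < 1" using assms by (simp add: norm_divide)
  have factor: "cmod (of_real \<rho> * cis \<theta> - w) = cmod w * cmod (1 - of_real \<rho> / w * cis \<theta>)" for \<theta>
  proof -
    have "of_real \<rho> * cis \<theta> - w = - w * (1 - of_real \<rho> / w * cis \<theta>)"
      using \<open>w \<noteq> 0\<close> by (simp add: field_simps)
    then show ?thesis by (simp only: norm_mult norm_minus_cancel)
  qed
  then show "integrable lborel_circle (\<lambda>\<theta>. ln (cmod (of_real \<rho> * cis \<theta> - w)))"
        "integral\<^sup>L lborel_circle (\<lambda>\<theta>. ln (cmod (of_real \<rho> * cis \<theta> - w))) = 2*pi*ln (cmod w)"
    using lborel_circle_ln_norm_factor[OF q _ factor] \<open>w \<noteq> 0\<close> by auto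
qed

lemma norm_scaled_circle_minus_mono:
  fixes w u :: complex
  assumes "cmod w = \<rho>" "cmod u = 1" "\<rho> \<ge> 0" "1 \<le> s" "s \<le> t"
  shows "cmod (of_real (s*\<rho>) * u - w) \<le> cmod (of_real (t*\<rho>) * u - w)"
proof -
  have "Re (cnj u * w) \<le> \<rho>"
    using complex_Re_le_cmod[of "cnj u * w"] assms(1,2) by (simp add: norm_mult)
  moreover have "\<rho> \<le> s * \<rho>"
    using assms mult_right_mono[of 1 s \<rho>] by simp
  ultimately have cross: "0 \<le> (t - s) * \<rho> * (s * \<rho> - Re (cnj u * w))"
    using assms by (intro mult_nonneg_nonneg) auto
  have sq: "(cmod (of_real (x*\<rho>) * u - w))\<^sup>2 = (x*\<rho>)\<^sup>2 - 2 * (x*\<rho>) * Re (cnj u * w) + \<rho>\<^sup>2" for x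
  proof -
    have "(Re u)\<^sup>2 + (Im u)\<^sup>2 = 1" "(Re w)\<^sup>2 + (Im w)\<^sup>2 = \<rho>\<^sup>2"
      using assms(1,2) by (simp_all add: cmod_power2[symmetric])
    moreover have "(cmod (of_real (x*\<rho>) * u - w))\<^sup>2 = (x*\<rho>*Re u - Re w)\<^sup>2 + (x*\<rho>*Im u - Im w)\<^sup>2"
      by (simp add: cmod_power2)
    moreover have "\<dots> = (x*\<rho>)\<^sup>2 * ((Re u)\<^sup>2 + (Im u)\<^sup>2) - 2*(x*\<rho>) * (Re u * Re w + Im u * Im w)
                     + ((Re w)\<^sup>2 + (Im w)\<^sup>2)"
      by (simp add: power2_eq_square algebra_simps)
    ultimately show ?thesis by simp
  qed
  have "(t*\<rho>)\<^sup>2 - 2*(t*\<rho>) * Re (cnj u * w) - ((s*\<rho>)\<^sup>2 - 2*(s*\<rho>) * Re (cnj u * w))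
        = 2 * ((t - s) * \<rho> * (s * \<rho> - Re (cnj u * w))) + ((t - s) * \<rho>)\<^sup>2"
    by (simp add: power2_eq_square algebra_simps)
  then have "(cmod (of_real (s*\<rho>) * u - w))\<^sup>2 \<le> (cmod (of_real (t*\<rho>) * u - w))\<^sup>2"
    unfolding sq using cross zero_le_power2[of "(t - s) * \<rho>"] by linarith
  then show ?thesis by (rule power2_le_imp_le) simp
qed

lemma ln_norm_scaled_circle_approx:
  fixes w u :: complex
  assumes w: "cmod w = \<rho>" and \<rho>: "\<rho> > 0" and u: "cmod u = 1"
  defines "t n \<equiv> 1 + inverse (real (Suc n))"
  shows "t \<longlonglongrightarrow> 1"
    and "mono (\<lambda>n. - ln (cmod (of_real (t n * \<rho>) * u - w)))"
    and "of_real \<rho> * u \<noteq> w \<Longrightarrow>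
      (\<lambda>n. - ln (cmod (of_real (t n * \<rho>) * u - w))) \<longlonglongrightarrow> - ln (cmod (of_real \<rho> * u - w))"
proof -
  have t: "1 < t n" "t (Suc n) \<le> t n" for n
    by (simp_all add: t_def field_simps)
  have pos: "0 < cmod (of_real (t n * \<rho>) * u - w)" for n
  proof -
    have "cmod (of_real (t n * \<rho>) * u) \<noteq> cmod w"
      using t(1)[of n] w \<rho> u by (simp add: norm_mult)
    then show ?thesis by auto
  qed
  show "mono (\<lambda>n. - ln (cmod (of_real (t n * \<rho>) * u - w)))"
  proof (rule iffD2[OF mono_iff_le_Suc], intro allI)
    fix n
    have "cmod (of_real (t (Suc n) * \<rho>) * u - w) \<le> cmod (of_real (t n * \<rho>) * u - w)"
      using w \<rho> u t[of "Suc n"] t[of n] by (intro norm_scaled_circle_minus_mono) auto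
    then show "- ln (cmod (of_real (t n * \<rho>) * u - w)) \<le> - ln (cmod (of_real (t (Suc n) * \<rho>) * u - w))"
      using pos by simp
  qed
  show t_lim: "t \<longlonglongrightarrow> 1"
    unfolding t_def using tendsto_add[OF tendsto_const LIMSEQ_inverse_real_of_nat, of 1] by simp
  then have "(\<lambda>n. cmod (of_real (t n * \<rho>) * u - w)) \<longlonglongrightarrow> cmod (of_real (1 * \<rho>) * u - w)"
    by (intro tendsto_intros)
  then show "(\<lambda>n. - ln (cmod (of_real (t n * \<rho>) * u - w))) \<longlonglongrightarrow> - ln (cmod (of_real \<rho> * u - w))"
    if "of_real \<rho> * u \<noteq> w"
    using that by (intro tendsto_minus tendsto_ln) auto
qed

text \<open>On the circle itself the integrand has a logarithmic singularity; approach the circle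
  from outside, where the integrals decrease monotonically to the claimed value.\<close>
lemma lborel_circle_ln_norm_on:
  fixes w :: complex
  assumes w: "cmod w = \<rho>" and \<rho>: "\<rho> > 0"
  shows "integrable lborel_circle (\<lambda>\<theta>. ln (cmod (of_real \<rho> * cis \<theta> - w)))"
        "integral\<^sup>L lborel_circle (\<lambda>\<theta>. ln (cmod (of_real \<rho> * cis \<theta> - w))) = 2*pi*ln \<rho>"
proof -
  define t where "t n = 1 + inverse (real (Suc n))" for n
  define f where "f n \<theta> = - ln (cmod (of_real (t n * \<rho>) * cis \<theta> - w))" for n \<theta>
  define u where "u \<theta> = - ln (cmod (of_real \<rho> * cis \<theta> - w))" for \<theta>
  note approx = ln_norm_scaled_circle_approx[OF w \<rho> norm_cis, folded t_def]
  have inside: "cmod w < t n * \<rho>" for n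
    using w \<rho> by (simp add: t_def)
  have int: "integrable lborel_circle (f n)" for n
    unfolding f_def using lborel_circle_ln_norm_inside(1)[OF inside] by simp
  have mono: "AE \<theta> in lborel_circle. mono (\<lambda>n. f n \<theta>)"
    unfolding f_def using approx(2) by simp
  have "AE \<theta> in lborel_circle. 0 + of_real \<rho> * cis \<theta> \<noteq> w"
    using \<rho> by (intro AE_lborel_circle_avoids) simp
  then have lim: "AE \<theta> in lborel_circle. (\<lambda>n. f n \<theta>) \<longlonglongrightarrow> u \<theta>"
    unfolding f_def u_def by eventually_elim (rule approx(3), simp)
  have "integral\<^sup>L lborel_circle (f n) = - (2*pi*ln (t n * \<rho>))" for n
    unfolding f_def using lborel_circle_ln_norm_inside(2)[OF inside] by simp
  with approx(1) have int_lim: "(\<lambda>n. integral\<^sup>L lborel_circle (f n)) \<longlonglongrightarrow> - (2*pi*ln (1 * \<rho>))"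
    using \<rho> by (simp only:) (intro tendsto_intros; simp)
  have meas: "u \<in> borel_measurable lborel_circle"
    unfolding u_def by (intro borel_measurable_uminus borel_measurable_ln_continuous continuous_intros)
  have "integrable lborel_circle u" "integral\<^sup>L lborel_circle u = - (2*pi*ln \<rho>)"
    using integrable_monotone_convergence[OF int mono lim int_lim meas]
      integral_monotone_convergence[OF int mono lim int_lim meas] by simp_all
  then show "integrable lborel_circle (\<lambda>\<theta>. ln (cmod (of_real \<rho> * cis \<theta> - w)))"
        "integral\<^sup>L lborel_circle (\<lambda>\<theta>. ln (cmod (of_real \<rho> * cis \<theta> - w))) = 2*pi*ln \<rho>"
    unfolding u_def by simp_all
qed

lemma lborel_circle_ln_norm_ge:
  fixes w :: complex
  assumes "w \<noteq> 0" "\<rho> > 0"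
  shows "integrable lborel_circle (\<lambda>\<theta>. ln (cmod (of_real \<rho> * cis \<theta> - w)))"
        "2*pi*ln (cmod w) \<le> integral\<^sup>L lborel_circle (\<lambda>\<theta>. ln (cmod (of_real \<rho> * cis \<theta> - w)))"
proof -
  consider "cmod w < \<rho>" | "\<bar>\<rho>\<bar> < cmod w" | "cmod w = \<rho>"
    using assms by linarith
  then have "integrable lborel_circle (\<lambda>\<theta>. ln (cmod (of_real \<rho> * cis \<theta> - w))) \<and>
        2*pi*ln (cmod w) \<le> integral\<^sup>L lborel_circle (\<lambda>\<theta>. ln (cmod (of_real \<rho> * cis \<theta> - w)))"
  proof cases
    case 1
    then show ?thesis using lborel_circle_ln_norm_inside[OF 1] assms by simp
  next
    case 2
    then show ?thesis using lborel_circle_ln_norm_outside[OF 2] by simp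
  next
    case 3
    then show ?thesis using lborel_circle_ln_norm_on[OF 3 \<open>\<rho> > 0\<close>] by simp
  qed
  then show "integrable lborel_circle (\<lambda>\<theta>. ln (cmod (of_real \<rho> * cis \<theta> - w)))"
        "2*pi*ln (cmod w) \<le> integral\<^sup>L lborel_circle (\<lambda>\<theta>. ln (cmod (of_real \<rho> * cis \<theta> - w)))"
    by auto
qed

lemma ln_norm_poly_linear_factor:
  fixes p :: "complex poly"
  assumes "z \<noteq> a" "poly p z \<noteq> 0"
  shows "ln (cmod (poly ([:a, -1:] * p) z)) = ln (cmod (z - a)) + ln (cmod (poly p z))"
proof -
  have "poly ([:a, -1:] * p) z = - (z - a) * poly p z" by (simp add: algebra_simps)
  then show ?thesis
    using assms by (simp only: norm_mult norm_minus_cancel) (simp add: ln_mult)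
qed

lemma lborel_circle_ln_norm_poly_linear_factor:
  fixes p :: "complex poly"
  assumes \<rho>: "\<rho> > 0" and "b \<noteq> a" "poly p a \<noteq> 0"
    and int: "integrable lborel_circle (\<lambda>\<theta>. ln (cmod (poly p (a + of_real \<rho> * cis \<theta>))))"
  shows "integrable lborel_circle (\<lambda>\<theta>. ln (cmod (poly ([:b, -1:] * p) (a + of_real \<rho> * cis \<theta>))))"
    and "integral\<^sup>L lborel_circle (\<lambda>\<theta>. ln (cmod (poly ([:b, -1:] * p) (a + of_real \<rho> * cis \<theta>))))
         = integral\<^sup>L lborel_circle (\<lambda>\<theta>. ln (cmod (of_real \<rho> * cis \<theta> - (b - a))))
           + integral\<^sup>L lborel_circle (\<lambda>\<theta>. ln (cmod (poly p (a + of_real \<rho> * cis \<theta>))))"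
proof -
  define L where "L q \<theta> = ln (cmod (poly q (a + of_real \<rho> * cis \<theta>)))" for q \<theta>
  define F where "F \<theta> = ln (cmod (of_real \<rho> * cis \<theta> - (b - a)))" for \<theta>
  have "finite (insert b {z. poly p z = 0})"
    using \<open>poly p a \<noteq> 0\<close> poly_roots_finite[of p] by fastforce
  then have "AE \<theta> in lborel_circle. a + of_real \<rho> * cis \<theta> \<notin> insert b {z. poly p z = 0}"
    using \<rho> by (intro AE_lborel_circle_avoids_finite) simp_all
  then have split: "AE \<theta> in lborel_circle. L ([:b, -1:] * p) \<theta> = F \<theta> + L p \<theta>"
  proof eventually_elim
    case (elim \<theta>)
    have shift: "of_real \<rho> * cis \<theta> - (b - a) = (a + of_real \<rho> * cis \<theta>) - b" by simp
    from elim show ?case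
      unfolding L_def F_def shift by (intro ln_norm_poly_linear_factor) auto
  qed
  have int_F: "integrable lborel_circle F"
    unfolding F_def using lborel_circle_ln_norm_ge(1) \<open>b \<noteq> a\<close> \<rho> by simp
  have sum: "integrable lborel_circle (\<lambda>\<theta>. F \<theta> + L p \<theta>)"
    using int_F int by (simp add: L_def[abs_def])
  have meas: "L q \<in> borel_measurable lborel_circle" for q
    unfolding L_def by (intro borel_measurable_ln_continuous continuous_intros)
  have "integrable lborel_circle (L ([:b, -1:] * p))"
    by (rule integrable_cong_AE_imp[OF sum meas]) (use split in \<open>eventually_elim, simp\<close>)
  moreover have "integral\<^sup>L lborel_circle (L ([:b, -1:] * p)) = integral\<^sup>L lborel_circle F + integral\<^sup>L lborel_circle (L p)"
    using integral_cong_AE[OF meas borel_measurable_integrable[OF sum] split] int_F int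
    by (simp add: L_def[abs_def])
  ultimately show "integrable lborel_circle (\<lambda>\<theta>. ln (cmod (poly ([:b, -1:] * p) (a + of_real \<rho> * cis \<theta>))))"
    and "integral\<^sup>L lborel_circle (\<lambda>\<theta>. ln (cmod (poly ([:b, -1:] * p) (a + of_real \<rho> * cis \<theta>))))
         = integral\<^sup>L lborel_circle (\<lambda>\<theta>. ln (cmod (of_real \<rho> * cis \<theta> - (b - a))))
           + integral\<^sup>L lborel_circle (\<lambda>\<theta>. ln (cmod (poly p (a + of_real \<rho> * cis \<theta>))))"
    unfolding L_def[abs_def] F_def[abs_def] by simp_all
qed

text \<open>Factor \<open>p\<close> into linear factors and apply Jensen's formula to each of them.\<close>
lemma lborel_circle_ln_norm_poly_ge:
  fixes p :: "complex poly"
  assumes \<rho>: "\<rho> > 0"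
  shows "poly p a \<noteq> 0 \<Longrightarrow>
    integrable lborel_circle (\<lambda>\<theta>. ln (cmod (poly p (a + of_real \<rho> * cis \<theta>)))) \<and>
    2*pi*ln (cmod (poly p a)) \<le> integral\<^sup>L lborel_circle (\<lambda>\<theta>. ln (cmod (poly p (a + of_real \<rho> * cis \<theta>))))"
proof (induction p rule: poly_root_induct[where P = "\<lambda>_. True"])
  case 0
  then show ?case by simp
next
  case (no_roots p)
  then have "constant (poly p)"
    using fundamental_theorem_of_algebra by blast
  then have "(\<lambda>\<theta>. ln (cmod (poly p (a + of_real \<rho> * cis \<theta>)))) = (\<lambda>_. ln (cmod (poly p a)))"
    unfolding constant_def by metis
  then show ?case
    using lborel_circle_const[of "ln (cmod (poly p a))"] by (simp only: order_refl simp_thms)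
next
  case (root b p)
  have nonzero: "poly p a \<noteq> 0" "b \<noteq> a"
    using root.prems by auto
  note IH = root.IH[OF nonzero(1)]
  note step = lborel_circle_ln_norm_poly_linear_factor[OF \<rho> nonzero(2,1) conjunct1[OF IH]]
  have "ln (cmod (poly ([:b, -1:] * p) a)) = ln (cmod (b - a)) + ln (cmod (poly p a))"
    using ln_norm_poly_linear_factor[of a b p] nonzero by (simp add: norm_minus_commute)
  then show ?case
    using step IH lborel_circle_ln_norm_ge(2)[of "b - a" \<rho>] nonzero(2) \<rho> by (simp add: distrib_left add_mono)
qed

section \<open>Logarithms of functions dominating \<open>|h|\<^sup>2\<close> are subharmonic\<close>

lemma circle_mean_elog:
  fixes R :: "complex \<Rightarrow> real"
  assumes int: "integrable lborel_circle (\<lambda>\<theta>. ln (R (a + of_real \<rho> * cis \<theta>)))"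
    and pos: "AE \<theta> in lborel_circle. R (a + of_real \<rho> * cis \<theta>) > 0"
  shows "circle_mean (\<lambda>l. elog (R l)) a \<rho>
           = ereal (integral\<^sup>L lborel_circle (\<lambda>\<theta>. ln (R (a + of_real \<rho> * cis \<theta>))) / (2*pi))"
proof -
  define g where "g \<theta> = ln (R (a + of_real \<rho> * cis \<theta>))" for \<theta>
  obtain r q where rq: "0 \<le> r" "0 \<le> q" "(\<integral>\<^sup>+\<theta>. ennreal (g \<theta>) \<partial>lborel_circle) = ennreal r"
      "(\<integral>\<^sup>+\<theta>. ennreal (- g \<theta>) \<partial>lborel_circle) = ennreal q" "integral\<^sup>L lborel_circle g = r - q"
    using integrableE[OF int[folded g_def]] by metis
  have elog_eq: "AE \<theta> in lborel_circle. elog (R (a + of_real \<rho> * cis \<theta>)) = ereal (g \<theta>)"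
    using pos by eventually_elim (simp add: elog_def g_def)
  have "(\<integral>\<^sup>+\<theta>. e2ennreal (elog (R (a + of_real \<rho> * cis \<theta>))) * indicator {0..2*pi} \<theta> \<partial>lborel)
      = (\<integral>\<^sup>+\<theta>. ennreal (g \<theta>) \<partial>lborel_circle)"
    by (subst nn_integral_restrict_space[symmetric], simp)
       (rule nn_integral_cong_AE, use elog_eq in \<open>eventually_elim, simp\<close>)
  moreover have "(\<integral>\<^sup>+\<theta>. e2ennreal (- elog (R (a + of_real \<rho> * cis \<theta>))) * indicator {0..2*pi} \<theta> \<partial>lborel)
      = (\<integral>\<^sup>+\<theta>. ennreal (- g \<theta>) \<partial>lborel_circle)"
    by (subst nn_integral_restrict_space[symmetric], simp)
       (rule nn_integral_cong_AE, use elog_eq in \<open>eventually_elim, simp\<close>)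
  ultimately show ?thesis
    using rq unfolding circle_mean_def g_def[symmetric] by simp
qed

lemma ln_bounds_of_poly_dominated:
  fixes R :: "complex \<Rightarrow> real" and h :: "complex poly"
  assumes "R z \<ge> 0" "R a > 0" "poly h z \<noteq> 0" "(cmod (poly h z))\<^sup>2 \<le> R z * R a"
  shows "R z > 0" "2 * ln (cmod (poly h z)) - ln (R a) \<le> ln (R z)" "ln (R z) \<le> R z"
proof -
  have h_z: "0 < cmod (poly h z)" using assms(3) by simp
  then have prod_pos: "0 < R z * R a"
    using assms(4) by (meson less_le_trans zero_less_power)
  then show R_z: "R z > 0"
    using assms(1,2) by (simp add: zero_less_mult_iff)
  have "2 * ln (cmod (poly h z)) = ln ((cmod (poly h z))\<^sup>2)" using h_z by (simp add: ln_realpow)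
  also have "\<dots> \<le> ln (R z * R a)" using h_z prod_pos assms(4) by simp
  also have "\<dots> = ln (R z) + ln (R a)" using R_z assms(2) by (simp add: ln_mult)
  finally show "2 * ln (cmod (poly h z)) - ln (R a) \<le> ln (R z)" by simp
  show "ln (R z) \<le> R z" using ln_le_minus_one[OF R_z] by simp
qed

text \<open>\<open>ln R\<close> is squeezed between \<open>2 ln |h| - ln (R a)\<close>, whose circle means are at least \<open>ln (R a)\<close>,
  and \<open>R\<close> itself, which gives integrability.\<close>
lemma lborel_circle_ln_ge_of_poly_dominated:
  fixes R :: "complex \<Rightarrow> real" and h :: "complex poly"
  assumes contR: "continuous_on UNIV R" and nonneg: "\<And>z. R z \<ge> 0"
    and dominated: "\<And>l. (cmod (poly h l))\<^sup>2 \<le> R l * R a"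
    and h_a: "cmod (poly h a) = R a" and R_a: "R a > 0" and \<rho>: "\<rho> > 0"
  shows "AE \<theta> in lborel_circle. R (a + of_real \<rho> * cis \<theta>) > 0"
    and "integrable lborel_circle (\<lambda>\<theta>. ln (R (a + of_real \<rho> * cis \<theta>)))"
    and "2*pi*ln (R a) \<le> integral\<^sup>L lborel_circle (\<lambda>\<theta>. ln (R (a + of_real \<rho> * cis \<theta>)))"
proof -
  define C where "C \<theta> = a + of_real \<rho> * cis \<theta>" for \<theta>
  define H where "H \<theta> = ln (cmod (poly h (C \<theta>)))" for \<theta>
  define L where "L \<theta> = 2 * H \<theta> - ln (R a)" for \<theta>
  have "poly h a \<noteq> 0" using h_a R_a by auto
  from lborel_circle_ln_norm_poly_ge[OF \<rho> this]
  have poly_mean: "integrable lborel_circle H" "2*pi*ln (R a) \<le> integral\<^sup>L lborel_circle H"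
    using h_a by (simp_all add: H_def[abs_def] C_def)
  then have int_L: "integrable lborel_circle L"
    unfolding L_def using lborel_circle_const(1) by auto
  have "finite {z. poly h z = 0}"
    using \<open>poly h a \<noteq> 0\<close> poly_roots_finite[of h] by fastforce
  then have "AE \<theta> in lborel_circle. a + of_real \<rho> * cis \<theta> \<notin> {z. poly h z = 0}"
    using \<rho> by (intro AE_lborel_circle_avoids_finite) simp_all
  then have bounds: "AE \<theta> in lborel_circle. R (C \<theta>) > 0 \<and> L \<theta> \<le> ln (R (C \<theta>)) \<and> ln (R (C \<theta>)) \<le> R (C \<theta>)"
  proof eventually_elim
    case (elim \<theta>)
    then have "poly h (C \<theta>) \<noteq> 0" by (simp add: C_def)
    from ln_bounds_of_poly_dominated[of R "C \<theta>" a h, OF nonneg R_a this dominated]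
    show ?case by (simp add: L_def H_def)
  qed
  then show "AE \<theta> in lborel_circle. R (a + of_real \<rho> * cis \<theta>) > 0"
    by eventually_elim (simp add: C_def)
  have cont_circle: "continuous_on UNIV (\<lambda>\<theta>. R (C \<theta>))"
    unfolding C_def by (rule continuous_on_compose2[OF contR]) (auto intro!: continuous_intros)
  have int_ln: "integrable lborel_circle (\<lambda>\<theta>. ln (R (C \<theta>)))"
  proof (rule Bochner_Integration.integrable_bound)
    show "integrable lborel_circle (\<lambda>\<theta>. \<bar>L \<theta>\<bar> + \<bar>R (C \<theta>)\<bar>)"
      using int_L lborel_circle_continuous(1)[OF continuous_on_subset[OF cont_circle]] by auto
    show "(\<lambda>\<theta>. ln (R (C \<theta>))) \<in> borel_measurable lborel_circle"
      by (rule borel_measurable_ln_continuous[OF cont_circle])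
    show "AE \<theta> in lborel_circle. norm (ln (R (C \<theta>))) \<le> norm (\<bar>L \<theta>\<bar> + \<bar>R (C \<theta>)\<bar>)"
      using bounds by eventually_elim auto
  qed
  then show "integrable lborel_circle (\<lambda>\<theta>. ln (R (a + of_real \<rho> * cis \<theta>)))"
    by (simp add: C_def)
  have "integral\<^sup>L lborel_circle L \<le> integral\<^sup>L lborel_circle (\<lambda>\<theta>. ln (R (C \<theta>)))"
    by (rule integral_mono_AE[OF int_L int_ln]) (use bounds in \<open>eventually_elim, auto\<close>)
  moreover have "integral\<^sup>L lborel_circle L = 2 * integral\<^sup>L lborel_circle H - 2*pi*ln (R a)"
    unfolding L_def using poly_mean(1) lborel_circle_const by simp
  ultimately show "2*pi*ln (R a) \<le> integral\<^sup>L lborel_circle (\<lambda>\<theta>. ln (R (a + of_real \<rho> * cis \<theta>)))"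
    using poly_mean(2) unfolding C_def by linarith
qed

lemma usc_elog:
  fixes F :: "'a::topological_space \<Rightarrow> real"
  assumes "continuous_on UNIV F"
  shows "usc (\<lambda>x. elog (F x))"
  unfolding usc_def
proof
  fix c :: ereal
  show "open {x. elog (F x) < c}"
  proof (cases c)
    case (real r)
    have "elog (F x) < c \<longleftrightarrow> F x < exp r" for x
    proof (cases "F x \<le> 0")
      case True
      moreover have "F x < exp r" using True exp_gt_zero[of r] by linarith
      ultimately show ?thesis using real by (simp add: elog_def)
    next
      case False
      then show ?thesis using real ln_less_cancel_iff[of "F x" "exp r"] by (simp add: elog_def)
    qed
    then have "{x. elog (F x) < c} = {x. F x < exp r}" by blast
    also have "open \<dots>" by (intro open_Collect_less continuous_intros assms)
    finally show ?thesis .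
  qed (auto simp: elog_def)
qed

lemma subharmonic_C_elog_of_poly_dominated:
  fixes R :: "complex \<Rightarrow> real"
  assumes contR: "continuous_on UNIV R" and nonneg: "\<And>z. R z \<ge> 0"
    and poly_dominated: "\<And>a. R a > 0 \<Longrightarrow>
      \<exists>h. cmod (poly h a) = R a \<and> (\<forall>l. (cmod (poly h l))\<^sup>2 \<le> R l * R a)"
  shows "subharmonic_C (\<lambda>l. elog (R l))"
  unfolding subharmonic_C_def
proof (intro conjI allI impI usc_elog[OF contR])
  fix a :: complex and \<rho> :: real
  assume \<rho>: "\<rho> > 0"
  show "elog (R a) \<le> circle_mean (\<lambda>l. elog (R l)) a \<rho>"
  proof (cases "R a > 0")
    case True
    then obtain h where "\<And>l. (cmod (poly h l))\<^sup>2 \<le> R l * R a" "cmod (poly h a) = R a"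
      using poly_dominated by blast
    note sub_mean = lborel_circle_ln_ge_of_poly_dominated[OF contR nonneg this True \<rho>]
    show ?thesis
      unfolding circle_mean_elog[OF sub_mean(2,1)]
      using True sub_mean(3) by (simp add: elog_def pos_le_divide_eq mult.commute)
  qed (simp add: elog_def)
qed (simp add: elog_def)

section \<open>Non-negative \<open>2 \<times> 2\<close> matrices and restrictions to complex lines\<close>

lemma nonneg_def_2x2_hermitian:
  assumes "nonneg_def_2x2 m11 m12 m21 m22"
  shows "m11 = of_real (Re m11)" "Re m11 \<ge> 0" "m22 = of_real (Re m22)" "m21 = cnj m12"
proof -
  have q: "Im (cnj a * m11 * a + cnj a * m12 * b + cnj b * m21 * a + cnj b * m22 * b) = 0 \<and>
           Re (cnj a * m11 * a + cnj a * m12 * b + cnj b * m21 * a + cnj b * m22 * b) \<ge> 0" for a b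
    using assms unfolding nonneg_def_2x2_def Let_def by blast
  show m11: "m11 = of_real (Re m11)" "Re m11 \<ge> 0"
    using q[of 1 0] by (simp_all add: complex_eq_iff)
  show m22: "m22 = of_real (Re m22)"
    using q[of 0 1] by (simp add: complex_eq_iff)
  have "Im m12 + Im m21 = 0" "Re m12 - Re m21 = 0"
    using q[of 1 1] q[of 1 \<i>] m11 m22 by (simp_all add: complex_eq_iff)
  then show "m21 = cnj m12" by (simp add: complex_eq_iff)
qed

lemma le_mult_if_quadratic_form_nonneg:
  fixes x y K :: real
  assumes "x \<ge> 0" and quad: "\<And>s t. 0 \<le> x * s\<^sup>2 * K + 2 * s * t * K + y * t\<^sup>2"
  shows "K \<le> x * y"
proof (cases "x > 0")
  case True
  have "0 \<le> x * (-1/x)\<^sup>2 * K + 2 * (-1/x) * 1 * K + y * 1\<^sup>2" by (rule quad)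
  also have "\<dots> = y - K/x" using True by (simp add: power2_eq_square field_simps)
  finally show ?thesis using True by (simp add: field_simps)
next
  case False
  then have "x = 0" using \<open>x \<ge> 0\<close> by simp
  show ?thesis
  proof (rule ccontr)
    assume "\<not> K \<le> x * y"
    then have "K > 0" using \<open>x = 0\<close> by simp
    have "0 \<le> x * (-(y+1)/(2*K))\<^sup>2 * K + 2 * (-(y+1)/(2*K)) * 1 * K + y * 1\<^sup>2" by (rule quad)
    also have "\<dots> = -1" using \<open>K > 0\<close> \<open>x = 0\<close> by (simp add: field_simps)
    finally show False by simp
  qed
qed

text \<open>The quadratic form is evaluated at \<open>(s m\<^sub>1\<^sub>2, t)\<close>, which makes it real in \<open>s\<close> and \<open>t\<close>.\<close>
lemma nonneg_def_2x2_norm_le: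
  assumes "nonneg_def_2x2 m11 m12 m21 m22"
  shows "(cmod m12)\<^sup>2 \<le> Re m11 * Re m22"
proof (rule le_mult_if_quadratic_form_nonneg)
  note hermitian = nonneg_def_2x2_hermitian[OF assms]
  show "Re m11 \<ge> 0" by (rule hermitian(2))
  have norm_square: "cnj m12 * m12 = of_real ((cmod m12)\<^sup>2)"
    by (metis complex_norm_square mult.commute)
  fix s t :: real
  let ?a = "m12 * of_real s" and ?b = "of_real t"
  have "cnj ?a * m11 * ?a + cnj ?a * m12 * ?b + cnj ?b * m21 * ?a + cnj ?b * m22 * ?b
      = (of_real (Re m11) * (of_real s)\<^sup>2 + 2 * of_real s * of_real t) * (cnj m12 * m12)
        + of_real (Re m22) * (of_real t)\<^sup>2"
    by (subst (1 2) hermitian(1), subst (1 2) hermitian(3), unfold hermitian(4))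
       (simp add: algebra_simps power2_eq_square)
  also have "\<dots> = of_real (Re m11 * s\<^sup>2 * (cmod m12)\<^sup>2 + 2 * s * t * (cmod m12)\<^sup>2 + Re m22 * t\<^sup>2)"
    unfolding norm_square by (simp add: algebra_simps)
  finally show "0 \<le> Re m11 * s\<^sup>2 * (cmod m12)\<^sup>2 + 2 * s * t * (cmod m12)\<^sup>2 + Re m22 * t\<^sup>2"
    using assms unfolding nonneg_def_2x2_def Let_def by (metis Re_complex_of_real)
qed

lemma hpoly_along_line_is_poly: "\<exists>P. \<forall>l. hpoly c (A + l *s B) W = poly P l"
proof -
  define K where "K \<beta> = monom_pow (\<chi> i. cnj (W $ i)) \<beta>" for \<beta>
  define Q where "Q \<alpha> = (\<Prod>i\<in>UNIV. [:A$i, B$i:] ^ \<alpha> i)" for \<alpha>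
  define S where "S = {p. c (fst p) (snd p) \<noteq> 0}"
  have monom: "monom_pow (A + l *s B) \<alpha> = poly (Q \<alpha>) l" for \<alpha> l
    unfolding Q_def monom_pow_def poly_prod poly_power by (intro prod.cong refl) (simp add: mult.commute)
  have "hpoly c (A + l *s B) W = poly (\<Sum>p\<in>S. smult (c (fst p) (snd p) * K (snd p)) (Q (fst p))) l" for l
    unfolding hpoly_def case_prod_unfold poly_sum poly_smult S_def
    by (intro sum.cong refl) (simp add: monom K_def mult_ac)
  then show ?thesis by blast
qed

lemma continuous_on_hpoly:
  assumes "continuous_on S f" "continuous_on S g"
  shows "continuous_on S (\<lambda>x. hpoly c (f x) (g x))"
  unfolding hpoly_def monom_pow_def case_prod_unfold
  by (intro continuous_intros assms)

lemma subharmonic_C_elog_hpoly_line: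
  assumes "\<forall>z w. nonneg_def_2x2 (hpoly c z z) (hpoly c z w) (hpoly c w z) (hpoly c w w)"
  shows "subharmonic_C (\<lambda>l. elog (Re (hpoly c (A + l *s B) (A + l *s B))))"
proof (rule subharmonic_C_elog_of_poly_dominated)
  have real: "hpoly c z z = of_real (Re (hpoly c z z))" and nonneg: "Re (hpoly c z z) \<ge> 0" for z
    using nonneg_def_2x2_hermitian(1,2) assms by blast+
  have norm_diag: "cmod (hpoly c z z) = Re (hpoly c z z)" for z
    using real[of z] nonneg[of z] by (metis norm_of_real abs_of_nonneg)
  have Cauchy_Schwarz: "(cmod (hpoly c z w))\<^sup>2 \<le> Re (hpoly c z z) * Re (hpoly c w w)" for z w
    using nonneg_def_2x2_norm_le assms by blast
  have line: "(\<lambda>l. A + l *s B) = (\<lambda>l. \<chi> i. A $ i + l * B $ i)"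
    by (auto simp: vec_eq_iff)
  have "continuous_on UNIV (\<lambda>l. A + l *s B)"
    unfolding line by (intro continuous_intros)
  then show "continuous_on UNIV (\<lambda>l. Re (hpoly c (A + l *s B) (A + l *s B)))"
    by (intro continuous_on_Re continuous_on_hpoly)
  show "Re (hpoly c (A + l *s B) (A + l *s B)) \<ge> 0" for l
    by (rule nonneg)
  fix a
  obtain P where P: "\<And>l. hpoly c (A + l *s B) (A + a *s B) = poly P l"
    using hpoly_along_line_is_poly by metis
  show "\<exists>h. cmod (poly h a) = Re (hpoly c (A + a *s B) (A + a *s B)) \<and>
      (\<forall>l. (cmod (poly h l))\<^sup>2 \<le> Re (hpoly c (A + l *s B) (A + l *s B)) * Re (hpoly c (A + a *s B) (A + a *s B)))"
  proof (intro exI conjI allI)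
    show "cmod (poly P a) = Re (hpoly c (A + a *s B) (A + a *s B))"
      using norm_diag by (simp flip: P)
    show "(cmod (poly P l))\<^sup>2 \<le> Re (hpoly c (A + l *s B) (A + l *s B)) * Re (hpoly c (A + a *s B) (A + a *s B))" for l
      using Cauchy_Schwarz by (simp flip: P)
  qed
qed

theorem lemma7p2:
  fixes c :: "('n::finite \<Rightarrow> nat) \<Rightarrow> ('n \<Rightarrow> nat) \<Rightarrow> complex"
  assumes "herm_sym_coeffs c"
    and "\<forall>z w. nonneg_def_2x2 (hpoly c z z) (hpoly c z w) (hpoly c w z) (hpoly c w w)"
  shows "(\<forall>z. Im (hpoly c z z) = 0 \<and> Re (hpoly c z z) \<ge> 0)
         \<and> psh (\<lambda>z. elog (Re (hpoly c z z)))"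
proof -
  have "hpoly c z z = of_real (Re (hpoly c z z))" "Re (hpoly c z z) \<ge> 0" for z
    using nonneg_def_2x2_hermitian(1,2) assms(2) by blast+
  then have diag: "Im (hpoly c z z) = 0 \<and> Re (hpoly c z z) \<ge> 0" for z
    by (metis Im_complex_of_real)
  have "continuous_on UNIV (\<lambda>z. Re (hpoly c z z))"
    by (intro continuous_on_Re continuous_on_hpoly continuous_on_id)
  then show ?thesis
    unfolding psh_def using diag usc_elog subharmonic_C_elog_hpoly_line[OF assms(2)] by blast
qed

end
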